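(* Let $m\ge 2$, let $n_1,\dots,n_m\ge 5$ be odd, and let $\mathcal{C}=\mathcal{C}(C_{n_1},\dots,C_{n_m})$ be the odd chain cycle. Then the vertex cover number of its strong resolving graph is $$\alpha(\mathcal{C}_{SR})=m-1+\left\lfloor\frac{n_1}{2}\right\rfloor+\left\lfloor\frac{n_m}{2}\right\rfloor+\sum_{i=2}^{m-1}\left\lfloor\frac{n_i-2}{2}\right\rfloor.$$
   Context: Let $C_{n_1},\dots,C_{n_m}$ be pairwise disjoint cycles, $V(C_{n_i})=\{v^i_1,\dots,v^i_{n_i}\}$ with $v^i_j$ adjacent to $v^i_{j+1}$ (indices mod $n_i$). The odd chain cycle (all $n_i$ odd) is obtained by identifying $v^i_{(n_i+1)/2+1}$ with $v^{i+1}_1$ for $i=1,\dots,m-1$. A vertex $u$ is maximally distant from $v$ if every neighbor $w$ of $u$ satisfies $d(v,w)\le d(u,v)$; $u,v$ are mutually maximally distant if each is maximally distant from the other. The strong resolving graph $G_{SR}$ of a connected graph $G$ has vertex set $V(G)$, with $u,v$ adjacent iff they are mutually maximally distant in $G$. $\alpha(H)$ denotes the minimum size of a vertex cover of $H$. *)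

theory Defs
  imports Main
begin

definition gdist :: "('a \<Rightarrow> 'a \<Rightarrow> bool) \<Rightarrow> 'a \<Rightarrow> 'a \<Rightarrow> nat" where
  "gdist adj u v = (LEAST k. (adj ^^ k) u v)"

definition max_distant :: "('a \<Rightarrow> 'a \<Rightarrow> bool) \<Rightarrow> 'a \<Rightarrow> 'a \<Rightarrow> bool" where
  "max_distant adj u v \<longleftrightarrow> (\<forall>w. adj u w \<longrightarrow> gdist adj v w \<le> gdist adj u v)"

definition mutually_max_distant :: "('a \<Rightarrow> 'a \<Rightarrow> bool) \<Rightarrow> 'a \<Rightarrow> 'a \<Rightarrow> bool" where
  "mutually_max_distant adj u v \<longleftrightarrow> max_distant adj u v \<and> max_distant adj v u"

definition strong_resolving_adj :: "'a set \<Rightarrow> ('a \<Rightarrow> 'a \<Rightarrow> bool) \<Rightarrow> 'a \<Rightarrow> 'a \<Rightarrow> bool" where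
  "strong_resolving_adj V adj u v \<longleftrightarrow> u \<in> V \<and> v \<in> V \<and> mutually_max_distant adj u v"

definition is_vertex_cover :: "'a set \<Rightarrow> ('a \<Rightarrow> 'a \<Rightarrow> bool) \<Rightarrow> 'a set \<Rightarrow> bool" where
  "is_vertex_cover V adj C \<longleftrightarrow> C \<subseteq> V \<and> (\<forall>u\<in>V. \<forall>v\<in>V. adj u v \<longrightarrow> u \<in> C \<or> v \<in> C)"

definition vertex_cover_number :: "'a set \<Rightarrow> ('a \<Rightarrow> 'a \<Rightarrow> bool) \<Rightarrow> nat" where
  "vertex_cover_number V adj = (LEAST k. \<exists>C. is_vertex_cover V adj C \<and> finite C \<and> card C = k)"

text \<open>Vertex v^i_j of cycle C_{n_i} is the pair (i,j), 1 \<le> i \<le> m, 1 \<le> j \<le> n i.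
  The identification of v^i_{(n_i+1)/2+1} with v^{i+1}_1 is realised by the canonical
  representative map: v^{i+1}_1 is represented by (i, (n i + 1) div 2 + 1).\<close>

definition occ_canon :: "(nat \<Rightarrow> nat) \<Rightarrow> nat \<times> nat \<Rightarrow> nat \<times> nat" where
  "occ_canon n p = (if fst p \<ge> 2 \<and> snd p = 1 then (fst p - 1, (n (fst p - 1) + 1) div 2 + 1) else p)"

definition occ_verts :: "nat \<Rightarrow> (nat \<Rightarrow> nat) \<Rightarrow> (nat \<times> nat) set" where
  "occ_verts m n = occ_canon n ` {(i, j). 1 \<le> i \<and> i \<le> m \<and> 1 \<le> j \<and> j \<le> n i}"

definition cyc_next :: "(nat \<Rightarrow> nat) \<Rightarrow> nat \<Rightarrow> nat \<Rightarrow> nat" where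
  "cyc_next n i j = (if j = n i then 1 else j + 1)"

definition occ_adj :: "nat \<Rightarrow> (nat \<Rightarrow> nat) \<Rightarrow> nat \<times> nat \<Rightarrow> nat \<times> nat \<Rightarrow> bool" where
  "occ_adj m n x y \<longleftrightarrow> (\<exists>i j. 1 \<le> i \<and> i \<le> m \<and> 1 \<le> j \<and> j \<le> n i \<and>
      ((x = occ_canon n (i, j) \<and> y = occ_canon n (i, cyc_next n i j)) \<or>
       (y = occ_canon n (i, j) \<and> x = occ_canon n (i, cyc_next n i j))))"

end

theory Submission
  imports Defs
begin

text \<open>
  Write n_i = 2 k_i + 1. The cycle C_i is entered at v^i_1 and left at v^i_{k_i+2}, two
  vertices at distance k_i, so a distance in the chain is a cycle distance plus the numbers k_l
  of the cycles passed in between. From this explicit distance one reads off the strong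
  resolving graph: two non-joint vertices of one cycle are adjacent when they are antipodal,
  and a vertex of C_i at distance k_i from its exit is adjacent to every vertex of a later
  cycle C_i' at distance k_i' from its entry.

  Lower bound: inside each cycle the antipodal edges contain a matching of size k_1, k_m or
  k_i - 1. The cross edges force, for i < i', the far-from-exit vertices of C_i or the
  far-from-entry vertices of C_i' into the cover; hence all cycles but one contain such
  vertices as well, and there the matching can be chosen to avoid them, giving one more cover
  vertex each. Upper bound: leave out of the cover, in each cycle, the vertices of one of the
  two arcs between entry and exit (the entry itself and, in C_1, also v^1_2 excepted); no two
  left-out vertices are mutually maximally distant, because one of them always has a
  neighbour farther away from the other.
\<close>

definition cycle_dist :: "nat \<Rightarrow> nat \<Rightarrow> nat \<Rightarrow> nat" where
  "cycle_dist N a b =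
     (if a \<le> b then min (b - a) (N - (b - a)) else min (a - b) (N - (a - b)))"

definition cycle_succ :: "nat \<Rightarrow> nat \<Rightarrow> nat" where
  "cycle_succ N j = (if j = N then 1 else j + 1)"

definition cycle_pred :: "nat \<Rightarrow> nat \<Rightarrow> nat" where
  "cycle_pred N j = (if j = 1 then N else j - 1)"

lemma cycle_dist_commute: "cycle_dist N a b = cycle_dist N b a"
  unfolding cycle_dist_def by auto

lemma cycle_dist_self [simp]: "cycle_dist N a a = 0"
  unfolding cycle_dist_def by simp

lemma cycle_dist_le_half:
  "1 \<le> a \<Longrightarrow> a \<le> N \<Longrightarrow> 1 \<le> b \<Longrightarrow> b \<le> N \<Longrightarrow> cycle_dist N a b \<le> N div 2"
  unfolding cycle_dist_def min_def by (auto split: if_splits)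

lemma cycle_dist_eq_0D:
  "cycle_dist N a b = 0 \<Longrightarrow> 1 \<le> a \<Longrightarrow> a \<le> N \<Longrightarrow> 1 \<le> b \<Longrightarrow> b \<le> N \<Longrightarrow> a = b"
  unfolding cycle_dist_def min_def by (auto split: if_splits)

lemma cycle_succ_range: "1 \<le> b \<Longrightarrow> b \<le> N \<Longrightarrow> 1 \<le> cycle_succ N b \<and> cycle_succ N b \<le> N"
  unfolding cycle_succ_def by auto

lemma cycle_pred_range: "1 \<le> b \<Longrightarrow> b \<le> N \<Longrightarrow> 1 \<le> cycle_pred N b \<and> cycle_pred N b \<le> N"
  unfolding cycle_pred_def by auto

lemma cycle_succ_pred: "1 \<le> b \<Longrightarrow> b \<le> N \<Longrightarrow> cycle_succ N (cycle_pred N b) = b"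
  unfolding cycle_succ_def cycle_pred_def by auto

lemma cycle_dist_succ_le:
  "1 \<le> a \<Longrightarrow> a \<le> N \<Longrightarrow> 1 \<le> b \<Longrightarrow> b \<le> N \<Longrightarrow>
    cycle_dist N a (cycle_succ N b) \<le> cycle_dist N a b + 1"
  unfolding cycle_dist_def cycle_succ_def min_def by (auto split: if_splits)

lemma cycle_dist_le_succ:
  "1 \<le> a \<Longrightarrow> a \<le> N \<Longrightarrow> 1 \<le> b \<Longrightarrow> b \<le> N \<Longrightarrow>
    cycle_dist N a b \<le> cycle_dist N a (cycle_succ N b) + 1"
  unfolding cycle_dist_def cycle_succ_def min_def by (auto split: if_splits)

lemma cycle_dist_closer_neighbour_le:
  assumes a: "1 \<le> a" "a \<le> N" and b: "1 \<le> b" "b \<le> N" and "a \<le> b"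
    and pos: "0 < cycle_dist N a b"
  shows "cycle_dist N a (cycle_succ N b) + 1 = cycle_dist N a b \<or>
         cycle_dist N a (cycle_pred N b) + 1 = cycle_dist N a b"
proof -
  from \<open>a \<le> b\<close> pos have "a < b" by (auto intro: le_neq_trans)
  show ?thesis
  proof (cases "2 * (b - a) \<le> N")
    case True
    with \<open>a < b\<close> a have "cycle_pred N b = b - 1" "cycle_dist N a b = b - a"
      "cycle_dist N a (b - 1) = b - 1 - a"
      unfolding cycle_pred_def cycle_dist_def by auto
    with \<open>a < b\<close> show ?thesis by auto
  next
    case False
    then have c: "cycle_dist N a b = N - (b - a)" using \<open>a \<le> b\<close> unfolding cycle_dist_def by auto
    show ?thesis
    proof (cases "b = N")
      case True
      with False a have "cycle_succ N b = 1" "cycle_dist N a 1 = a - 1"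
        unfolding cycle_succ_def cycle_dist_def by auto
      with c True a show ?thesis by auto
    next
      case b_lt: False
      with False \<open>a \<le> b\<close> b have "cycle_succ N b = b + 1"
        "cycle_dist N a (b + 1) = N - (b + 1 - a)"
        unfolding cycle_succ_def cycle_dist_def by auto
      with c b_lt \<open>a \<le> b\<close> b False show ?thesis by auto
    qed
  qed
qed

lemma cycle_dist_closer_neighbour_gt:
  assumes a: "1 \<le> a" "a \<le> N" and b: "1 \<le> b" "b \<le> N" and "b < a"
  shows "cycle_dist N a (cycle_succ N b) + 1 = cycle_dist N a b \<or>
         cycle_dist N a (cycle_pred N b) + 1 = cycle_dist N a b"
proof (cases "2 * (a - b) \<le> N")
  case True
  with \<open>b < a\<close> a have "cycle_succ N b = b + 1" "cycle_dist N a b = a - b"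
    "cycle_dist N a (b + 1) = a - (b + 1)"
    unfolding cycle_succ_def cycle_dist_def by auto
  with \<open>b < a\<close> show ?thesis by auto
next
  case False
  with \<open>b < a\<close> have c: "cycle_dist N a b = N - (a - b)" unfolding cycle_dist_def by auto
  show ?thesis
  proof (cases "b = 1")
    case True
    with False a have "cycle_pred N b = N" "cycle_dist N a N = N - a"
      unfolding cycle_pred_def cycle_dist_def by auto
    with c True a \<open>b < a\<close> show ?thesis by auto
  next
    case b_gt: False
    with False \<open>b < a\<close> b have "cycle_pred N b = b - 1" "cycle_dist N a (b - 1) = N - (a - (b - 1))"
      unfolding cycle_pred_def cycle_dist_def by auto
    with c b_gt \<open>b < a\<close> a b False show ?thesis by auto
  qed
qed

lemma cycle_dist_closer_neighbour:
  assumes "1 \<le> a" "a \<le> N" "1 \<le> b" "b \<le> N" "0 < cycle_dist N a b"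
  shows "cycle_dist N a (cycle_succ N b) + 1 = cycle_dist N a b \<or>
         cycle_dist N a (cycle_pred N b) + 1 = cycle_dist N a b"
  using assms cycle_dist_closer_neighbour_le cycle_dist_closer_neighbour_gt by (cases "a \<le> b") auto

lemma gdist_eq_potential:
  assumes lipschitz: "\<And>x y. adj x y \<Longrightarrow> f y \<le> f x + 1"
    and zero: "f z = 0" and zero_unique: "\<And>x. x \<in> S \<Longrightarrow> f x = 0 \<Longrightarrow> x = z"
    and pred: "\<And>x d. x \<in> S \<Longrightarrow> f x = Suc d \<Longrightarrow> \<exists>y\<in>S. adj y x \<and> f y = d"
    and x: "x \<in> S"
  shows "gdist adj z x = f x"
proof -
  have lower: "f y \<le> k" if "(adj ^^ k) z y" for k y
    using that
  proof (induction k arbitrary: y)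
    case 0
    then show ?case using zero by simp
  next
    case (Suc k)
    then obtain w where "(adj ^^ k) z w" "adj w y" by (meson relpowp_Suc_E)
    with Suc.IH lipschitz[of w y] show ?case by fastforce
  qed
  have reach: "(adj ^^ d) z y" if "y \<in> S" "f y = d" for d y
    using that
  proof (induction d arbitrary: y)
    case 0
    then show ?case using zero_unique by simp
  next
    case (Suc d)
    then obtain w where "w \<in> S" "adj w y" "f w = d" using pred by blast
    with Suc.IH show ?case by (blast intro: relpowp_Suc_I)
  qed
  show ?thesis
    unfolding gdist_def by (rule Least_equality) (use x reach lower in auto)
qed

lemma card_Int_ge_if_covers_pairs:
  assumes S: "finite S" and J: "finite J" and "inj_on f J" "inj_on g J" "f ` J \<inter> g ` J = {}"
    and covers: "\<forall>j\<in>J. f j \<in> C \<or> g j \<in> C"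
    and E: "E \<subseteq> C" "E \<inter> (f ` J \<union> g ` J) = {}" and sub: "f ` J \<union> g ` J \<union> E \<subseteq> S"
  shows "card J + card E \<le> card (C \<inter> S)"
proof -
  define h where "h j = (if f j \<in> C then f j else g j)" for j
  have "f x \<noteq> g y" if "x \<in> J" "y \<in> J" for x y
    using assms(5) that by blast
  then have inj: "inj_on h J"
    using assms(3,4) unfolding inj_on_def h_def by metis
  have "finite E" using S sub finite_subset by blast
  then have "card (h ` J \<union> E) = card J + card E"
    using card_Un_disjoint[of "h ` J" E] E(2) J card_image[OF inj] by (auto simp: h_def)
  moreover have "card (h ` J \<union> E) \<le> card (C \<inter> S)"
    by (rule card_mono) (use S covers sub E(1) in \<open>auto simp: h_def\<close>)
  ultimately show ?thesis by simp
qed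

lemma all_but_one_of_ordered_alternative:
  fixes m :: nat
  assumes "1 \<le> m" and alternative: "\<And>i i'. 1 \<le> i \<Longrightarrow> i < i' \<Longrightarrow> i' \<le> m \<Longrightarrow> X i \<or> Y i'"
  shows "\<exists>t\<in>{1..m}. \<forall>i\<in>{1..m} - {t}. (i < m \<and> X i) \<or> (1 < i \<and> Y i)"
proof (cases "\<forall>i. 1 \<le> i \<and> i < m \<longrightarrow> X i")
  case True
  with \<open>1 \<le> m\<close> show ?thesis by (intro bexI[of _ m]) auto
next
  case False
  define t where "t = (LEAST i. 1 \<le> i \<and> i < m \<and> \<not> X i)"
  have t: "1 \<le> t" "t < m" "\<not> X t"
    unfolding t_def using False by (metis (mono_tags, lifting) LeastI)+
  have "(i < m \<and> X i) \<or> (1 < i \<and> Y i)" if "i \<in> {1..m} - {t}" for i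
  proof (cases "i < t")
    case True
    then have "X i" using that not_less_Least[of i "\<lambda>i. 1 \<le> i \<and> i < m \<and> \<not> X i"] t
      unfolding t_def by auto
    with True t show ?thesis by auto
  next
    case False
    with that t alternative[of t i] show ?thesis by auto
  qed
  with t show ?thesis by (intro bexI[of _ t]) auto
qed

lemma sum_first_middle_last:
  fixes m :: nat
  assumes "2 \<le> m"
  shows "(\<Sum>i\<in>{1..m}. f i) = f 1 + (\<Sum>i = 2..m - 1. f i) + f m"
proof -
  have "{1..m} = insert 1 (insert m {2..m - 1})" using assms by auto
  then show ?thesis using assms by (simp add: ac_simps)
qed

locale odd_chain_cycle =
  fixes m :: nat and n :: "nat \<Rightarrow> nat"
  assumes two_le_m: "2 \<le> m" and odd_ge_5: "\<forall>i\<in>{1..m}. odd (n i) \<and> 5 \<le> n i"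
begin

abbreviation half :: "nat \<Rightarrow> nat" where "half i \<equiv> n i div 2"

definition exit_pos :: "nat \<Rightarrow> nat" where "exit_pos i = (n i + 1) div 2 + 1"

definition half_prefix :: "nat \<Rightarrow> nat" where "half_prefix i = (\<Sum>l<i. half l)"

definition grid :: "(nat \<times> nat) set" where
  "grid = {(i, j). 1 \<le> i \<and> i \<le> m \<and> 1 \<le> j \<and> j \<le> n i}"

abbreviation V :: "(nat \<times> nat) set" where "V \<equiv> occ_verts m n"
abbreviation adj :: "nat \<times> nat \<Rightarrow> nat \<times> nat \<Rightarrow> bool" where "adj \<equiv> occ_adj m n"
abbreviation canon :: "nat \<times> nat \<Rightarrow> nat \<times> nat" where "canon \<equiv> occ_canon n"

definition dist_formula :: "nat \<Rightarrow> nat \<Rightarrow> nat \<Rightarrow> nat \<Rightarrow> nat" where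
  "dist_formula i0 j0 i j =
    (if i = i0 then cycle_dist (n i) j0 j
     else if i0 < i then
       cycle_dist (n i0) j0 (exit_pos i0) + (half_prefix i - half_prefix (Suc i0)) +
       cycle_dist (n i) 1 j
     else
       cycle_dist (n i) j (exit_pos i) + (half_prefix i0 - half_prefix (Suc i)) +
       cycle_dist (n i0) 1 j0)"

definition chain_dist :: "nat \<times> nat \<Rightarrow> nat \<times> nat \<Rightarrow> nat" where
  "chain_dist z x = dist_formula (fst z) (snd z) (fst x) (snd x)"

lemma chain_dist_Pair [simp]: "chain_dist (i0, j0) (i, j) = dist_formula i0 j0 i j"
  by (simp add: chain_dist_def)

lemma chain_dist_commute: "chain_dist z x = chain_dist x z"
  unfolding chain_dist_def dist_formula_def by (auto simp: cycle_dist_commute)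

lemma n_eq_half: "1 \<le> i \<Longrightarrow> i \<le> m \<Longrightarrow> n i = 2 * half i + 1"
  using odd_ge_5 by (metis atLeastAtMost_iff odd_two_times_div_two_succ)

lemma two_le_half:
  assumes "1 \<le> i" "i \<le> m" shows "2 \<le> half i"
proof -
  have "5 \<le> n i" using odd_ge_5 assms by auto
  then show ?thesis using n_eq_half[OF assms] by linarith
qed

lemma exit_pos_eq: "1 \<le> i \<Longrightarrow> i \<le> m \<Longrightarrow> exit_pos i = half i + 2"
  unfolding exit_pos_def using n_eq_half by fastforce

lemma half_prefix_Suc: "half_prefix (Suc i) = half_prefix i + half i"
  unfolding half_prefix_def by simp

lemma half_prefix_mono: "i \<le> i' \<Longrightarrow> half_prefix i \<le> half_prefix i'"
  unfolding half_prefix_def by (rule sum_mono2) auto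

lemma cycle_dist_1_exit_pos: "1 \<le> i \<Longrightarrow> i \<le> m \<Longrightarrow> cycle_dist (n i) 1 (exit_pos i) = half i"
  using n_eq_half[of i] exit_pos_eq[of i] unfolding cycle_dist_def by auto

lemma exit_pos_range: "1 \<le> i \<Longrightarrow> i \<le> m \<Longrightarrow> 1 \<le> exit_pos i \<and> exit_pos i \<le> n i"
  using exit_pos_eq[of i] n_eq_half[of i] two_le_half[of i] by simp

lemma canon_eq: "canon (i, j) = (if 2 \<le> i \<and> j = 1 then (i - 1, exit_pos (i - 1)) else (i, j))"
  unfolding occ_canon_def exit_pos_def by simp

lemma mem_grid_iff [simp]: "(i, j) \<in> grid \<longleftrightarrow> 1 \<le> i \<and> i \<le> m \<and> 1 \<le> j \<and> j \<le> n i"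
  unfolding grid_def by simp

lemma V_eq: "V = {p \<in> grid. \<not> (2 \<le> fst p \<and> snd p = 1)}"
proof
  show "V \<subseteq> {p \<in> grid. \<not> (2 \<le> fst p \<and> snd p = 1)}"
  proof
    fix x assume "x \<in> V"
    then obtain i j where ij: "(i, j) \<in> grid" and x: "x = canon (i, j)"
      unfolding occ_verts_def grid_def by auto
    show "x \<in> {p \<in> grid. \<not> (2 \<le> fst p \<and> snd p = 1)}"
    proof (cases "2 \<le> i \<and> j = 1")
      case True
      with ij have "1 \<le> i - 1" "i - 1 \<le> m" by auto
      with True x show ?thesis
        using canon_eq exit_pos_range[of "i - 1"] exit_pos_eq[of "i - 1"] by auto
    next
      case False
      with x ij show ?thesis by (auto simp: canon_eq)
    qed
  qed
  show "{p \<in> grid. \<not> (2 \<le> fst p \<and> snd p = 1)} \<subseteq> V"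
  proof
    fix x assume x: "x \<in> {p \<in> grid. \<not> (2 \<le> fst p \<and> snd p = 1)}"
    then obtain i j where "x = (i, j)" by (cases x) auto
    with x have "x = canon (i, j)" "(i, j) \<in> grid" by (auto simp: canon_eq)
    then show "x \<in> V" unfolding occ_verts_def grid_def by auto
  qed
qed

lemma mem_V_iff:
  "(i, j) \<in> V \<longleftrightarrow> 1 \<le> i \<and> i \<le> m \<and> 1 \<le> j \<and> j \<le> n i \<and> \<not> (2 \<le> i \<and> j = 1)"
  using V_eq by auto

lemma V_subset_grid: "V \<subseteq> grid"
  using V_eq by auto

lemma canon_in_V: "p \<in> grid \<Longrightarrow> canon p \<in> V"
  unfolding occ_verts_def grid_def by auto

lemma canon_eq_self: "p \<in> V \<Longrightarrow> canon p = p"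
  using V_eq by (cases p) (auto simp: canon_eq)

lemma chain_dist_canon:
  assumes z: "z \<in> grid" and p: "p \<in> grid"
  shows "chain_dist z (canon p) = chain_dist z p"
proof -
  obtain i0 j0 i j where z_eq: "z = (i0, j0)" and p_eq: "p = (i, j)" by (cases z, cases p) auto
  show ?thesis
  proof (cases "2 \<le> i \<and> j = 1")
    case False
    then show ?thesis using p_eq by (auto simp: canon_eq)
  next
    case True
    then have c: "canon p = (i - 1, exit_pos (i - 1))" using p_eq canon_eq by simp
    have pre: "half_prefix i = half_prefix (i - 1) + half (i - 1)"
      using half_prefix_Suc[of "i - 1"] True by simp
    have "cycle_dist (n (i - 1)) 1 (exit_pos (i - 1)) = half (i - 1)"
      using cycle_dist_1_exit_pos[of "i - 1"] True p p_eq by auto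
    have mono: "i0 < i - 1 \<Longrightarrow> half_prefix (Suc i0) \<le> half_prefix (i - 1)"
      "i < i0 \<Longrightarrow> half_prefix (Suc i) \<le> half_prefix i0"
      by (simp_all add: half_prefix_mono)
    have i: "i - 1 < i" "Suc (i - 1) = i" "i - 1 \<noteq> i" "\<not> i < i - 1" using True by auto
    consider "i0 = i" | "i0 = i - 1" | "i0 < i - 1" | "i < i0" by linarith
    then show ?thesis
    proof cases
      case 3
      then show ?thesis using True z_eq p_eq c pre mono i \<open>cycle_dist _ 1 _ = _\<close>
        by (simp add: dist_formula_def) linarith
    next
      case 4
      then have "cycle_dist (n i) 1 (exit_pos i) = half i"
        using cycle_dist_1_exit_pos[of i] p p_eq by auto
      with 4 show ?thesis using True z_eq p_eq c pre mono i half_prefix_Suc[of i]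
        by (simp add: dist_formula_def)
    qed (use True z_eq p_eq c i in \<open>simp_all add: dist_formula_def cycle_dist_commute\<close>)
  qed
qed

lemma adj_iff: "adj x y \<longleftrightarrow> (\<exists>i j. 1 \<le> i \<and> i \<le> m \<and> 1 \<le> j \<and> j \<le> n i \<and>
   ((x = canon (i, j) \<and> y = canon (i, cycle_succ (n i) j)) \<or>
    (y = canon (i, j) \<and> x = canon (i, cycle_succ (n i) j))))"
  unfolding occ_adj_def cyc_next_def cycle_succ_def by simp

lemma adj_commute: "adj x y = adj y x"
  unfolding adj_iff by blast

lemma adj_in_V: "adj x y \<Longrightarrow> x \<in> V \<and> y \<in> V"
  unfolding adj_iff using canon_in_V cycle_succ_range by fastforce

lemma adj_canon_succ: "(i, j) \<in> grid \<Longrightarrow> adj (canon (i, j)) (canon (i, cycle_succ (n i) j))"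
  unfolding adj_iff by auto

lemma adj_canon_pred: "(i, j) \<in> grid \<Longrightarrow> adj (canon (i, cycle_pred (n i) j)) (canon (i, j))"
  using adj_canon_succ[of i "cycle_pred (n i) j"] cycle_pred_range[of j "n i"] cycle_succ_pred
  by auto

lemma chain_dist_row:
  assumes z: "z \<in> grid" and i: "1 \<le> i" "i \<le> m"
  shows "\<exists>a c. 1 \<le> a \<and> a \<le> n i \<and> (\<forall>j. chain_dist z (i, j) = c + cycle_dist (n i) a j)"
proof -
  obtain i0 j0 where z_eq: "z = (i0, j0)" by (cases z) auto
  consider "i = i0" | "i0 < i" | "i < i0" by linarith
  then show ?thesis
  proof cases
    case 1
    with z z_eq show ?thesis by (intro exI[of _ j0] exI[of _ 0]) (auto simp: dist_formula_def)
  next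
    case 2
    with z_eq exit_pos_range[OF i] show ?thesis
      by (rule_tac exI[of _ 1], rule_tac exI[of _ "cycle_dist (n i0) j0 (exit_pos i0) +
          (half_prefix i - half_prefix (Suc i0))"]) (auto simp: dist_formula_def)
  next
    case 3
    with z_eq exit_pos_range[OF i] show ?thesis
      by (rule_tac exI[of _ "exit_pos i"], rule_tac exI[of _ "half_prefix i0 - half_prefix (Suc i) +
          cycle_dist (n i0) 1 j0"]) (auto simp: dist_formula_def cycle_dist_commute)
  qed
qed

lemma chain_dist_adj_le:
  assumes z: "z \<in> grid" and "adj x y"
  shows "chain_dist z y \<le> chain_dist z x + 1"
proof -
  obtain i j where ij: "(i, j) \<in> grid" and
    e: "(x = canon (i, j) \<and> y = canon (i, cycle_succ (n i) j)) \<or>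
        (y = canon (i, j) \<and> x = canon (i, cycle_succ (n i) j))"
    using \<open>adj x y\<close> unfolding adj_iff by auto
  have succ: "(i, cycle_succ (n i) j) \<in> grid" using ij cycle_succ_range by auto
  have "1 \<le> i" "i \<le> m" using ij by auto
  then obtain a c where a: "1 \<le> a" "a \<le> n i"
    and row: "\<forall>j. chain_dist z (i, j) = c + cycle_dist (n i) a j"
    using chain_dist_row[OF z] by blast
  show ?thesis
    using e chain_dist_canon[OF z ij] chain_dist_canon[OF z succ] row ij
      cycle_dist_succ_le[OF a, of j] cycle_dist_le_succ[OF a, of j] by auto
qed

lemma chain_dist_pred_in_row:
  assumes z: "z \<in> grid" and ij: "(i, j) \<in> grid" and a: "1 \<le> a" "a \<le> n i"
    and row: "\<forall>j'. chain_dist z (i, j') = c + cycle_dist (n i) a j'"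
    and pos: "0 < cycle_dist (n i) a j"
    and x: "canon (i, j) = x" and d: "chain_dist z x = Suc d"
  shows "\<exists>y\<in>V. adj y x \<and> chain_dist z y = d"
proof -
  have j: "1 \<le> j" "j \<le> n i" using ij by auto
  obtain j' where j': "(i, j') \<in> grid" "cycle_dist (n i) a j' + 1 = cycle_dist (n i) a j"
    "adj (canon (i, j')) x"
    using cycle_dist_closer_neighbour[OF a j pos] adj_canon_succ[OF ij] adj_canon_pred[OF ij]
      cycle_succ_range[OF j] cycle_pred_range[OF j] ij x adj_commute by fastforce
  then show ?thesis
    using chain_dist_canon[OF z j'(1)] chain_dist_canon[OF z ij] row x d canon_in_V[OF j'(1)]
    by (intro bexI[of _ "canon (i, j')"]) auto
qed

lemma chain_dist_eq_0D:
  assumes z: "z \<in> V" and x: "x \<in> V" and d: "chain_dist z x = 0"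
  shows "z = x"
proof -
  obtain i0 j0 i j where z_eq: "z = (i0, j0)" and x_eq: "x = (i, j)" by (cases z, cases x) auto
  have zr: "1 \<le> i0" "i0 \<le> m" "1 \<le> j0" "j0 \<le> n i0" "\<not> (2 \<le> i0 \<and> j0 = 1)"
    using z z_eq mem_V_iff by auto
  have xr: "1 \<le> i" "i \<le> m" "1 \<le> j" "j \<le> n i" "\<not> (2 \<le> i \<and> j = 1)"
    using x x_eq mem_V_iff by auto
  consider "i = i0" | "i0 < i" | "i < i0" by linarith
  then show ?thesis
  proof cases
    case 1
    then show ?thesis
      using d z_eq x_eq zr xr cycle_dist_eq_0D[of "n i" j0 j] by (auto simp: dist_formula_def)
  next
    case 2
    then have "cycle_dist (n i) 1 j = 0" using d z_eq x_eq by (auto simp: dist_formula_def)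
    with 2 xr zr show ?thesis using cycle_dist_eq_0D[of "n i" 1 j] by auto
  next
    case 3
    then have "cycle_dist (n i0) 1 j0 = 0" using d z_eq x_eq by (auto simp: dist_formula_def)
    with 3 xr zr show ?thesis using cycle_dist_eq_0D[of "n i0" 1 j0] by auto
  qed
qed

lemma chain_dist_pred_earlier:
  assumes z: "(i0, j0) \<in> V" and x: "(i, j) \<in> V" and lt: "i < i0"
    and d: "chain_dist (i0, j0) (i, j) = Suc d"
  shows "\<exists>y\<in>V. adj y (i, j) \<and> chain_dist (i0, j0) y = d"
proof -
  have zg: "(i0, j0) \<in> grid" and xg: "(i, j) \<in> grid" using z x V_subset_grid by auto
  have i: "1 \<le> i" "i \<le> m" and i0: "i0 \<le> m" "1 \<le> j0" "j0 \<le> n i0" using zg xg by auto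
  have x_canon: "canon (i, j) = (i, j)" using canon_eq_self[OF x] .
  have row: "\<forall>j'. chain_dist (i0, j0) (i, j') = (half_prefix i0 - half_prefix (Suc i) +
      cycle_dist (n i0) 1 j0) + cycle_dist (n i) (exit_pos i) j'"
    using lt by (auto simp: dist_formula_def cycle_dist_commute)
  show ?thesis
  proof (cases "0 < cycle_dist (n i) (exit_pos i) j")
    case True
    then show ?thesis
      using chain_dist_pred_in_row[OF zg xg _ _ row True x_canon d] exit_pos_range[OF i] by auto
  next
    case False
    txt \<open>Then (i, j) is the exit of cycle i, which is also the entry (Suc i, 1) of the next
      cycle; the closer neighbour lies in that cycle.\<close>
    then have "j = exit_pos i"
      using cycle_dist_eq_0D[of "n i" "exit_pos i" j] xg exit_pos_range[OF i] by auto
    then have x_entry: "canon (Suc i, 1) = (i, j)" using i by (simp add: canon_eq)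
    have entry: "(Suc i, 1) \<in> grid" using lt i0 n_eq_half[of "Suc i"] by auto
    have d_entry: "chain_dist (i0, j0) (Suc i, 1) = Suc d"
      using chain_dist_canon[OF zg entry] x_entry d by simp
    show ?thesis
    proof (cases "Suc i = i0")
      case True
      have row': "\<forall>j'. chain_dist (i0, j0) (Suc i, j') = 0 + cycle_dist (n (Suc i)) j0 j'"
        using True by (simp add: dist_formula_def)
      have "0 < cycle_dist (n (Suc i)) j0 1" using d_entry True by (simp add: dist_formula_def)
      then show ?thesis
        using chain_dist_pred_in_row[OF zg entry _ _ row' _ x_entry d] i0 True by auto
    next
      case False
      then have "Suc i < i0" using lt by auto
      then have row': "\<forall>j'. chain_dist (i0, j0) (Suc i, j') =
          (half_prefix i0 - half_prefix (Suc (Suc i)) + cycle_dist (n i0) 1 j0) +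
          cycle_dist (n (Suc i)) (exit_pos (Suc i)) j'"
        by (auto simp: dist_formula_def cycle_dist_commute)
      have si: "1 \<le> Suc i" "Suc i \<le> m" using lt i0 by auto
      have "0 < cycle_dist (n (Suc i)) (exit_pos (Suc i)) 1"
        using cycle_dist_1_exit_pos[OF si] two_le_half[OF si] by (simp add: cycle_dist_commute)
      then show ?thesis
        using chain_dist_pred_in_row[OF zg entry _ _ row' _ x_entry d] exit_pos_range[OF si] by auto
    qed
  qed
qed

lemma chain_dist_pred:
  assumes z: "z \<in> V" and x: "x \<in> V" and d: "chain_dist z x = Suc d"
  shows "\<exists>y\<in>V. adj y x \<and> chain_dist z y = d"
proof -
  obtain i0 j0 i j where z_eq: "z = (i0, j0)" and x_eq: "x = (i, j)" by (cases z, cases x) auto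
  have zg: "z \<in> grid" and xg: "(i, j) \<in> grid" using z x x_eq V_subset_grid by auto
  have zr: "1 \<le> j0" "j0 \<le> n i0" "\<not> (2 \<le> i0 \<and> j0 = 1)" using z z_eq mem_V_iff by auto
  have xr: "\<not> (2 \<le> i \<and> j = 1)" using x x_eq mem_V_iff by auto
  have x_canon: "canon (i, j) = x" using canon_eq_self[OF x] x_eq by simp
  consider "i = i0" | "i0 < i" | "i < i0" by linarith
  then show ?thesis
  proof cases
    case 1
    then have row: "\<forall>j'. chain_dist z (i, j') = 0 + cycle_dist (n i) j0 j'"
      using z_eq by (simp add: dist_formula_def)
    have "0 < cycle_dist (n i) j0 j" using d z_eq x_eq 1 by (simp add: dist_formula_def)
    then show ?thesis using chain_dist_pred_in_row[OF zg xg _ _ row _ x_canon d] zr 1 by auto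
  next
    case 2
    then have row: "\<forall>j'. chain_dist z (i, j') = (cycle_dist (n i0) j0 (exit_pos i0) +
        (half_prefix i - half_prefix (Suc i0))) + cycle_dist (n i) 1 j'"
      using z_eq by (simp add: dist_formula_def)
    have "j \<noteq> 1" using xr 2 zg z_eq by auto
    then have "0 < cycle_dist (n i) 1 j" using cycle_dist_eq_0D[of "n i" 1 j] xg by fastforce
    then show ?thesis using chain_dist_pred_in_row[OF zg xg _ _ row _ x_canon d] xg by auto
  next
    case 3
    then show ?thesis using chain_dist_pred_earlier z x d z_eq x_eq by blast
  qed
qed

lemma gdist_eq_chain_dist:
  assumes z: "z \<in> V" and x: "x \<in> V"
  shows "gdist adj z x = chain_dist z x"
proof (rule gdist_eq_potential[where S = V])
  show "chain_dist z y \<le> chain_dist z w + 1" if "adj w y" for w y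
    using chain_dist_adj_le that z V_subset_grid by blast
  show "chain_dist z z = 0" by (cases z) (simp add: dist_formula_def)
  show "y = z" if "y \<in> V" "chain_dist z y = 0" for y
    using chain_dist_eq_0D[OF z that] by simp
  show "\<exists>w\<in>V. adj w y \<and> chain_dist z w = d" if "y \<in> V" "chain_dist z y = Suc d" for y d
    using chain_dist_pred[OF z that] .
qed (rule x)

abbreviation SR :: "nat \<times> nat \<Rightarrow> nat \<times> nat \<Rightarrow> bool" where
  "SR \<equiv> strong_resolving_adj V adj"

definition non_joint :: "nat \<times> nat \<Rightarrow> bool" where
  "non_joint p \<longleftrightarrow> p \<in> V \<and> \<not> (fst p < m \<and> snd p = exit_pos (fst p))"

lemma non_joint_iff: "non_joint (i, j) \<longleftrightarrow> 1 \<le> i \<and> i \<le> m \<and> 1 \<le> j \<and> j \<le> n i \<and>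
    \<not> (2 \<le> i \<and> j = 1) \<and> \<not> (i < m \<and> j = half i + 2)"
  unfolding non_joint_def using mem_V_iff exit_pos_eq by auto

lemma canon_eq_non_joint: "p \<in> grid \<Longrightarrow> canon p = u \<Longrightarrow> non_joint u \<Longrightarrow> u = p"
  unfolding non_joint_def using two_le_m by (cases p) (auto simp: canon_eq split: if_splits)

lemma non_joint_adj:
  assumes "non_joint (i, j)" and "adj (i, j) w"
  shows "w = canon (i, cycle_succ (n i) j) \<or> w = canon (i, cycle_pred (n i) j)"
proof -
  obtain i' j' where ij: "(i', j') \<in> grid" and
    e: "((i, j) = canon (i', j') \<and> w = canon (i', cycle_succ (n i') j')) \<or>
        (w = canon (i', j') \<and> (i, j) = canon (i', cycle_succ (n i') j'))"
    using \<open>adj (i, j) w\<close> unfolding adj_iff by auto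
  from e show ?thesis
  proof
    assume "(i, j) = canon (i', j') \<and> w = canon (i', cycle_succ (n i') j')"
    with canon_eq_non_joint[OF ij] \<open>non_joint (i, j)\<close> show ?thesis by auto
  next
    assume h: "w = canon (i', j') \<and> (i, j) = canon (i', cycle_succ (n i') j')"
    have "(i', cycle_succ (n i') j') \<in> grid" using ij cycle_succ_range by auto
    with h \<open>non_joint (i, j)\<close> have "(i, j) = (i', cycle_succ (n i') j')"
      using canon_eq_non_joint by metis
    then have "i' = i" "j' = cycle_pred (n i) j"
      using ij unfolding cycle_succ_def cycle_pred_def by (auto split: if_splits)
    with h show ?thesis by auto
  qed
qed

lemma max_distantI:
  assumes u: "non_joint (i, j)" and v: "v \<in> V"
    and far: "\<forall>j'. 1 \<le> j' \<and> j' \<le> n i \<longrightarrow> chain_dist v (i, j') \<le> chain_dist v (i, j)"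
  shows "max_distant adj (i, j) v"
  unfolding max_distant_def
proof (intro allI impI)
  fix w assume "adj (i, j) w"
  have uV: "(i, j) \<in> V" using u non_joint_def by auto
  then have ij: "(i, j) \<in> grid" using V_subset_grid by auto
  have vg: "v \<in> grid" using v V_subset_grid by auto
  have "chain_dist v w \<le> chain_dist v (i, j)"
    using non_joint_adj[OF u \<open>adj (i, j) w\<close>]
  proof
    assume "w = canon (i, cycle_succ (n i) j)"
    then show ?thesis
      using chain_dist_canon[OF vg, of "(i, cycle_succ (n i) j)"] cycle_succ_range[of j "n i"]
        ij far
      by auto
  next
    assume "w = canon (i, cycle_pred (n i) j)"
    then show ?thesis
      using chain_dist_canon[OF vg, of "(i, cycle_pred (n i) j)"] cycle_pred_range[of j "n i"]
        ij far
      by auto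
  qed
  then show "gdist adj v w \<le> gdist adj (i, j) v"
    using gdist_eq_chain_dist[OF v] gdist_eq_chain_dist[OF uV v] adj_in_V[OF \<open>adj (i, j) w\<close>]
      chain_dist_commute[of v "(i, j)"] by simp
qed

lemma not_max_distantI:
  assumes u: "(i, j) \<in> V" and v: "v \<in> V"
    and closer: "chain_dist v (i, j) < chain_dist v (i, cycle_succ (n i) j) \<or>
                 chain_dist v (i, j) < chain_dist v (i, cycle_pred (n i) j)"
  shows "\<not> max_distant adj (i, j) v"
proof -
  have ij: "(i, j) \<in> grid" using u V_subset_grid by auto
  have vg: "v \<in> grid" using v V_subset_grid by auto
  have j: "1 \<le> j" "j \<le> n i" using ij by auto
  have u_canon: "canon (i, j) = (i, j)" using canon_eq_self[OF u] .
  have succ: "adj (i, j) (canon (i, cycle_succ (n i) j))"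
    using adj_canon_succ[OF ij] u_canon by simp
  have pred: "adj (i, j) (canon (i, cycle_pred (n i) j))"
    using adj_canon_pred[OF ij] u_canon adj_commute by simp
  have "chain_dist v (canon (i, cycle_succ (n i) j)) = chain_dist v (i, cycle_succ (n i) j)"
    "chain_dist v (canon (i, cycle_pred (n i) j)) = chain_dist v (i, cycle_pred (n i) j)"
    using chain_dist_canon[OF vg] cycle_succ_range[OF j] cycle_pred_range[OF j] ij by auto
  moreover have "gdist adj (i, j) v = chain_dist v (i, j)"
    using gdist_eq_chain_dist[OF u v] chain_dist_commute by simp
  ultimately show ?thesis unfolding max_distant_def
    using closer succ pred gdist_eq_chain_dist[OF v] adj_in_V[OF succ] adj_in_V[OF pred]
    by (metis not_le)
qed

lemma SR_antipodal:
  assumes u: "non_joint (i, j)" and v: "non_joint (i, j')" and "cycle_dist (n i) j j' = half i"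
  shows "SR (i, j) (i, j')"
proof -
  have uV: "(i, j) \<in> V" and vV: "(i, j') \<in> V" using u v non_joint_def by auto
  then have "1 \<le> j" "j \<le> n i" "1 \<le> j'" "j' \<le> n i" using mem_V_iff by auto
  then have "max_distant adj (i, j) (i, j')" "max_distant adj (i, j') (i, j)"
    using max_distantI[OF u vV] max_distantI[OF v uV] \<open>cycle_dist (n i) j j' = half i\<close>
      cycle_dist_le_half[of _ "n i"] by (auto simp: dist_formula_def cycle_dist_commute)
  with uV vV show ?thesis
    unfolding strong_resolving_adj_def mutually_max_distant_def by auto
qed

lemma SR_across:
  assumes u: "non_joint (i, j)" and v: "non_joint (i', j')" and "i < i'"
    and far_exit: "cycle_dist (n i) j (exit_pos i) = half i"
    and far_entry: "cycle_dist (n i') 1 j' = half i'"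
  shows "SR (i, j) (i', j')"
proof -
  have uV: "(i, j) \<in> V" and vV: "(i', j') \<in> V" using u v non_joint_def by auto
  then have i: "1 \<le> i" "i \<le> m" and "1 \<le> n i'" using mem_V_iff by auto
  have "max_distant adj (i, j) (i', j')"
    using max_distantI[OF u vV] \<open>i < i'\<close> far_exit cycle_dist_le_half[of _ "n i" "exit_pos i"]
      exit_pos_range[OF i] by (auto simp: dist_formula_def)
  moreover have "max_distant adj (i', j') (i, j)"
    using max_distantI[OF v uV] \<open>i < i'\<close> far_entry cycle_dist_le_half[of 1 "n i'"] \<open>1 \<le> n i'\<close>
    by (auto simp: dist_formula_def)
  ultimately show ?thesis using uV vV
    unfolding strong_resolving_adj_def mutually_max_distant_def by auto
qed

definition cover_row :: "nat \<Rightarrow> nat set" where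
  "cover_row i = (if i = 1 then {1, 2} \<union> {half 1 + 3..n 1} else {2..half i + 1})"

definition cover :: "(nat \<times> nat) set" where "cover = Sigma {1..m} cover_row"

definition outside_cover :: "nat \<times> nat \<Rightarrow> bool" where
  "outside_cover p \<longleftrightarrow> (fst p = 1 \<and> 3 \<le> snd p \<and> snd p \<le> half 1 + 2) \<or>
     (2 \<le> fst p \<and> fst p \<le> m \<and> half (fst p) + 2 \<le> snd p \<and> snd p \<le> n (fst p))"

lemma outside_cover_not_max_distant_same_cycle:
  assumes u: "outside_cover (i, j)" and v: "outside_cover (i, j')" and "j \<le> j'"
    and uV: "(i, j) \<in> V" and vV: "(i, j') \<in> V"
  shows "\<not> max_distant adj (i, j') (i, j)"
proof -
  have i: "1 \<le> i" "i \<le> m" using uV mem_V_iff by auto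
  have n_i: "n i = 2 * half i + 1" and "2 \<le> half i" using n_eq_half[OF i] two_le_half[OF i] by auto
  have "cycle_dist (n i) j j' < cycle_dist (n i) j (cycle_succ (n i) j')"
  proof (cases "i = 1")
    case True
    then have "3 \<le> j" "j' \<le> half i + 2" using u v unfolding outside_cover_def by auto
    with n_i \<open>2 \<le> half i\<close> \<open>j \<le> j'\<close> have "cycle_succ (n i) j' = j' + 1"
      "cycle_dist (n i) j (j' + 1) = j' + 1 - j" "cycle_dist (n i) j j' = j' - j"
      unfolding cycle_succ_def cycle_dist_def by auto
    with \<open>j \<le> j'\<close> show ?thesis by auto
  next
    case False
    then have r: "half i + 2 \<le> j" "j' \<le> n i" using u v i unfolding outside_cover_def by auto
    with n_i \<open>j \<le> j'\<close> have c: "cycle_dist (n i) j j' = j' - j" unfolding cycle_dist_def by auto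
    show ?thesis
    proof (cases "j' = n i")
      case True
      with r n_i have "cycle_succ (n i) j' = 1" "cycle_dist (n i) j 1 = n i + 1 - j"
        unfolding cycle_succ_def cycle_dist_def by auto
      with c True r \<open>j \<le> j'\<close> show ?thesis by auto
    next
      case False
      with r n_i \<open>j \<le> j'\<close> have "cycle_succ (n i) j' = j' + 1"
        "cycle_dist (n i) j (j' + 1) = j' + 1 - j"
        unfolding cycle_succ_def cycle_dist_def by auto
      with c \<open>j \<le> j'\<close> show ?thesis by auto
    qed
  qed
  then show ?thesis by (intro not_max_distantI[OF vV uV]) (auto simp: dist_formula_def)
qed

lemma outside_cover_not_max_distant_across:
  assumes u: "outside_cover (i, j)" and uV: "(i, j) \<in> V" and vV: "(i', j') \<in> V" and "i < i'"
  shows "\<not> max_distant adj (i, j) (i', j')"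
proof -
  have i: "1 \<le> i" "i \<le> m" using uV mem_V_iff by auto
  have n_i: "n i = 2 * half i + 1" and "2 \<le> half i" and e: "exit_pos i = half i + 2"
    using n_eq_half[OF i] two_le_half[OF i] exit_pos_eq[OF i] by auto
  have "cycle_dist (n i) j (exit_pos i) < cycle_dist (n i) (cycle_pred (n i) j) (exit_pos i) \<or>
        cycle_dist (n i) j (exit_pos i) < cycle_dist (n i) (cycle_succ (n i) j) (exit_pos i)"
  proof (cases "i = 1")
    case True
    then have "3 \<le> j" "j \<le> half i + 2" using u unfolding outside_cover_def by auto
    with n_i e have "cycle_pred (n i) j = j - 1"
      "cycle_dist (n i) (j - 1) (exit_pos i) = half i + 3 - j"
      "cycle_dist (n i) j (exit_pos i) = half i + 2 - j"
      unfolding cycle_pred_def cycle_dist_def by auto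
    moreover have "half i + 2 - j < half i + 3 - j" using \<open>j \<le> half i + 2\<close> by arith
    ultimately show ?thesis by simp
  next
    case False
    then have r: "half i + 2 \<le> j" "j \<le> n i" using u i unfolding outside_cover_def by auto
    with n_i e have c: "cycle_dist (n i) j (exit_pos i) = j - (half i + 2)"
      unfolding cycle_dist_def by auto
    show ?thesis
    proof (cases "j = n i")
      case True
      with n_i e have "cycle_succ (n i) j = 1" "cycle_dist (n i) 1 (exit_pos i) = half i"
        unfolding cycle_succ_def cycle_dist_def by auto
      with c True n_i \<open>2 \<le> half i\<close> show ?thesis by auto
    next
      case False
      with r n_i e have "cycle_succ (n i) j = j + 1"
        "cycle_dist (n i) (j + 1) (exit_pos i) = j + 1 - (half i + 2)"
        unfolding cycle_succ_def cycle_dist_def by auto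
      with c r show ?thesis by auto
    qed
  qed
  with \<open>i < i'\<close> show ?thesis by (intro not_max_distantI[OF uV vV]) (auto simp: dist_formula_def)
qed

lemma outside_cover_not_mutually_max_distant:
  assumes u: "outside_cover u" and v: "outside_cover v" and uV: "u \<in> V" and vV: "v \<in> V"
  shows "\<not> mutually_max_distant adj u v"
proof -
  obtain i j i' j' where u_eq: "u = (i, j)" and v_eq: "v = (i', j')" by (cases u, cases v) auto
  consider "i = i' \<and> j \<le> j'" | "i = i' \<and> j' \<le> j" | "i < i'" | "i' < i" by linarith
  then show ?thesis
    unfolding mutually_max_distant_def using u v uV vV u_eq v_eq
      outside_cover_not_max_distant_same_cycle[of i j j']
      outside_cover_not_max_distant_same_cycle[of i j' j]
      outside_cover_not_max_distant_across[of i j i' j']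
      outside_cover_not_max_distant_across[of i' j' i j]
    by cases auto
qed

lemma cover_is_vertex_cover: "is_vertex_cover V SR cover"
  unfolding is_vertex_cover_def
proof (intro conjI ballI impI)
  show "cover \<subseteq> V"
  proof
    fix p assume "p \<in> cover"
    then obtain i j where p: "p = (i, j)" "1 \<le> i" "i \<le> m" "j \<in> cover_row i"
      unfolding cover_def by auto
    with n_eq_half[OF p(2,3)] two_le_half[OF p(2,3)] show "p \<in> V"
      by (auto simp: cover_row_def mem_V_iff split: if_splits)
  qed
  have outside: "outside_cover p" if "p \<in> V" "p \<notin> cover" for p
  proof -
    obtain i j where p: "p = (i, j)" by (cases p) auto
    with that show ?thesis
      unfolding cover_def cover_row_def outside_cover_def by (auto simp: mem_V_iff split: if_splits)
  qed
  fix u v assume "u \<in> V" "v \<in> V" "SR u v"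
  then show "u \<in> cover \<or> v \<in> cover"
    using outside outside_cover_not_mutually_max_distant unfolding strong_resolving_adj_def by blast
qed

lemma SR_edge_covered: "is_vertex_cover V SR C \<Longrightarrow> SR u v \<Longrightarrow> u \<in> C \<or> v \<in> C"
  unfolding is_vertex_cover_def strong_resolving_adj_def by blast

lemma SR_shift_half:
  assumes i: "1 \<le> i" "i \<le> m" and j: "2 \<le> j" "j \<le> half i + 1" "j = 2 \<longrightarrow> i = m"
  shows "SR (i, j) (i, j + half i)"
proof (rule SR_antipodal)
  have "n i = 2 * half i + 1" "2 \<le> half i" using n_eq_half[OF i] two_le_half[OF i] by auto
  with i j show "non_joint (i, j)" "non_joint (i, j + half i)"
    "cycle_dist (n i) j (j + half i) = half i"
    by (auto simp: non_joint_iff cycle_dist_def)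
qed

lemma SR_shift_half_Suc:
  assumes i: "1 \<le> i" "i \<le> m" and j: "2 \<le> j" "j \<le> half i"
  shows "SR (i, j) (i, j + half i + 1)"
proof (rule SR_antipodal)
  have "n i = 2 * half i + 1" "2 \<le> half i" using n_eq_half[OF i] two_le_half[OF i] by auto
  with i j show "non_joint (i, j)" "non_joint (i, j + half i + 1)"
    "cycle_dist (n i) j (j + half i + 1) = half i"
    by (auto simp: non_joint_iff cycle_dist_def)
qed

lemma SR_first_cycle_wrap: "SR (1, half 1 + 1) (1, 1)"
proof (rule SR_antipodal)
  have i: "1 \<le> (1::nat)" "1 \<le> m" using two_le_m by auto
  have "n 1 = 2 * half 1 + 1" "2 \<le> half 1" using n_eq_half[OF i] two_le_half[OF i] by auto
  with i show "non_joint (1, half 1 + 1)" "non_joint (1, 1)"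
    "cycle_dist (n 1) (half 1 + 1) 1 = half 1"
    by (auto simp: non_joint_iff cycle_dist_def)
qed

definition row :: "nat \<Rightarrow> (nat \<times> nat) set" where "row i = {i} \<times> {..n i}"

lemma card_row_ge_shift_half:
  assumes C: "is_vertex_cover V SR C" and i: "1 \<le> i" "i \<le> m"
    and a: "2 \<le> a" "a \<le> 3" "a = 2 \<longrightarrow> i = m"
    and E: "E \<subseteq> C" "\<forall>p\<in>E. fst p = i \<and> snd p < a"
  shows "card {a..half i + 1} + card E \<le> card (C \<inter> row i)"
proof (rule card_Int_ge_if_covers_pairs[where f = "\<lambda>j. (i, j)" and g = "\<lambda>j. (i, j + half i)"])
  have "n i = 2 * half i + 1" "2 \<le> half i" using n_eq_half[OF i] two_le_half[OF i] by auto
  with E(2) a show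
    "E \<inter> ((\<lambda>j. (i, j)) ` {a..half i + 1} \<union> (\<lambda>j. (i, j + half i)) ` {a..half i + 1}) = {}"
    "(\<lambda>j. (i, j)) ` {a..half i + 1} \<union> (\<lambda>j. (i, j + half i)) ` {a..half i + 1} \<union> E \<subseteq> row i"
    unfolding row_def by force+
  show "\<forall>j\<in>{a..half i + 1}. (i, j) \<in> C \<or> (i, j + half i) \<in> C"
    using SR_edge_covered[OF C SR_shift_half[OF i]] a by auto
qed (use E a in \<open>auto simp: row_def inj_on_def\<close>)

lemma card_row_ge_shift_half_Suc:
  assumes C: "is_vertex_cover V SR C" and i: "1 \<le> i" "i \<le> m"
    and E: "E \<subseteq> C" "\<forall>p\<in>E. fst p = i \<and> (snd p = half i + 1 \<or> snd p = half i + 2)"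
  shows "card {2..half i} + card E \<le> card (C \<inter> row i)"
proof (rule card_Int_ge_if_covers_pairs[where f = "\<lambda>j. (i, j)" and g = "\<lambda>j. (i, j + half i + 1)"])
  have "n i = 2 * half i + 1" "2 \<le> half i" using n_eq_half[OF i] two_le_half[OF i] by auto
  with E(2) show "E \<inter> ((\<lambda>j. (i, j)) ` {2..half i} \<union> (\<lambda>j. (i, j + half i + 1)) ` {2..half i}) = {}"
    "(\<lambda>j. (i, j)) ` {2..half i} \<union> (\<lambda>j. (i, j + half i + 1)) ` {2..half i} \<union> E \<subseteq> row i"
    unfolding row_def by force+
  show "\<forall>j\<in>{2..half i}. (i, j) \<in> C \<or> (i, j + half i + 1) \<in> C"
    using SR_edge_covered[OF C SR_shift_half_Suc[OF i]] by auto
qed (use E in \<open>auto simp: row_def inj_on_def\<close>)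

lemma card_first_row_ge:
  assumes C: "is_vertex_cover V SR C"
  shows "half 1 \<le> card (C \<inter> row 1)"
proof -
  have i: "1 \<le> (1::nat)" "1 \<le> m" using two_le_m by auto
  have n_1: "n 1 = 2 * half 1 + 1" "2 \<le> half 1" using n_eq_half[OF i] two_le_half[OF i] by auto
  define partner where "partner j = (1::nat, if j \<le> half 1 then j + half 1 + 1 else 1)" for j
  have "card {2..half 1 + 1} + card ({} :: (nat \<times> nat) set) \<le> card (C \<inter> row 1)"
  proof (rule card_Int_ge_if_covers_pairs[where f = "\<lambda>j. (1, j)" and g = partner])
    show "\<forall>j\<in>{2..half 1 + 1}. (1, j) \<in> C \<or> partner j \<in> C"
    proof
      fix j assume j: "j \<in> {2..half 1 + 1}"
      show "(1, j) \<in> C \<or> partner j \<in> C"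
      proof (cases "j \<le> half 1")
        case True
        then show ?thesis
          using SR_edge_covered[OF C SR_shift_half_Suc[OF i, of j]] j by (simp add: partner_def)
      next
        case False
        with j have "j = half 1 + 1" by auto
        with False show ?thesis
          using SR_edge_covered[OF C SR_first_cycle_wrap] by (simp add: partner_def)
      qed
    qed
    show "inj_on partner {2..half 1 + 1}" unfolding inj_on_def partner_def by auto
    show "(\<lambda>j. (1, j)) ` {2..half 1 + 1} \<inter> partner ` {2..half 1 + 1} = {}"
      unfolding partner_def by (force split: if_splits)
    show "(\<lambda>j. (1, j)) ` {2..half 1 + 1} \<union> partner ` {2..half 1 + 1} \<union> {} \<subseteq> row 1"
      unfolding partner_def row_def using n_1 by auto
  qed (auto simp: row_def inj_on_def)
  then show ?thesis by simp
qed

definition far_from_exit :: "nat \<Rightarrow> (nat \<times> nat) set" where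
  "far_from_exit i = (if i = 1 then {(1, 1), (1, 2)} else {(i, 2)})"

definition far_from_entry :: "nat \<Rightarrow> (nat \<times> nat) set" where
  "far_from_entry i = (if i = m then {(m, half m + 1), (m, half m + 2)} else {(i, half i + 1)})"

lemma SR_far_from_exit_entry:
  assumes i: "1 \<le> i" "i < i'" "i' \<le> m" and x: "x \<in> far_from_exit i" and y: "y \<in> far_from_entry i'"
  shows "SR x y"
proof -
  have i_le: "i \<le> m" and i': "1 \<le> i'" using i by auto
  have n_i: "n i = 2 * half i + 1" "2 \<le> half i" "exit_pos i = half i + 2"
    using n_eq_half[OF i(1) i_le] two_le_half[OF i(1) i_le] exit_pos_eq[OF i(1) i_le] by auto
  have n_i': "n i' = 2 * half i' + 1" "2 \<le> half i'"
    using n_eq_half[OF i' i(3)] two_le_half[OF i' i(3)] by auto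
  obtain j where j: "x = (i, j)" "j = 1 \<or> j = 2" "j = 1 \<longrightarrow> i = 1"
  proof (cases "i = 1")
    case True
    then show ?thesis using that x unfolding far_from_exit_def by auto
  next
    case False
    then show ?thesis using that x unfolding far_from_exit_def by auto
  qed
  obtain j' where j': "y = (i', j')" "j' = half i' + 1 \<or> j' = half i' + 2"
    "j' = half i' + 2 \<longrightarrow> i' = m"
  proof (cases "i' = m")
    case True
    then have "y = (i', half i' + 1) \<or> y = (i', half i' + 2)"
      using y unfolding far_from_entry_def by simp
    then show ?thesis using that True by blast
  next
    case False
    then have "y = (i', half i' + 1)" using y unfolding far_from_entry_def by simp
    then show ?thesis using that by simp
  qed
  show ?thesis unfolding j(1) j'(1)
  proof (rule SR_across)
    show "non_joint (i, j)" using j i n_i by (auto simp: non_joint_iff)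
    show "non_joint (i', j')" using j' i n_i' by (auto simp: non_joint_iff)
    show "cycle_dist (n i) j (exit_pos i) = half i" using j n_i unfolding cycle_dist_def by auto
    show "cycle_dist (n i') 1 j' = half i'" using j' n_i' unfolding cycle_dist_def by auto
  qed (rule i(2))
qed

definition extra_cover :: "(nat \<times> nat) set \<Rightarrow> nat \<Rightarrow> bool" where
  "extra_cover C i \<longleftrightarrow> (i < m \<and> far_from_exit i \<subseteq> C) \<or> (1 < i \<and> far_from_entry i \<subseteq> C)"

lemma card_extra_cover_ge:
  assumes C: "is_vertex_cover V SR C"
  shows "m - 1 \<le> card {i\<in>{1..m}. extra_cover C i}"
proof -
  have "far_from_exit i \<subseteq> C \<or> far_from_entry i' \<subseteq> C" if "1 \<le> i" "i < i'" "i' \<le> m" for i i'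
    using SR_edge_covered[OF C SR_far_from_exit_entry[OF that]] by blast
  then obtain t where t: "t \<in> {1..m}" "\<forall>i\<in>{1..m} - {t}. extra_cover C i"
    using all_but_one_of_ordered_alternative[of m "\<lambda>i. far_from_exit i \<subseteq> C"
        "\<lambda>i. far_from_entry i \<subseteq> C"] two_le_m
    unfolding extra_cover_def by auto
  then have "card ({1..m} - {t}) \<le> card {i\<in>{1..m}. extra_cover C i}"
    by (intro card_mono) auto
  with t show ?thesis by simp
qed

definition row_lower :: "nat \<Rightarrow> nat" where
  "row_lower i = (if i = 1 \<or> i = m then half i else (n i - 2) div 2)"

lemma card_first_row_ge_extra:
  assumes C: "is_vertex_cover V SR C"
  shows "row_lower 1 + (if extra_cover C 1 then 1 else 0) \<le> card (C \<inter> row 1)"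
proof (cases "extra_cover C 1")
  case True
  have i: "1 \<le> (1::nat)" "1 \<le> m" using two_le_m by auto
  with True have "{(1, 1), (1, 2)} \<subseteq> C" unfolding extra_cover_def far_from_exit_def by auto
  then have "card {3..half 1 + 1} + card {(1::nat, 1::nat), (1, 2)} \<le> card (C \<inter> row 1)"
    by (intro card_row_ge_shift_half[OF C i]) auto
  with True two_le_half[OF i] show ?thesis unfolding row_lower_def by simp
next
  case False
  then show ?thesis using card_first_row_ge[OF C] unfolding row_lower_def by simp
qed

lemma card_last_row_ge_extra:
  assumes C: "is_vertex_cover V SR C"
  shows "row_lower m + (if extra_cover C m then 1 else 0) \<le> card (C \<inter> row m)"
proof -
  have i: "1 \<le> m" "m \<le> m" using two_le_m by auto
  show ?thesis
  proof (cases "extra_cover C m")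
    case True
    with two_le_m have "{(m, half m + 1), (m, half m + 2)} \<subseteq> C"
      unfolding extra_cover_def far_from_entry_def by auto
    then have "card {2..half m} + card {(m, half m + 1), (m, half m + 2)} \<le> card (C \<inter> row m)"
      by (intro card_row_ge_shift_half_Suc[OF C i]) auto
    with True two_le_half[OF i] show ?thesis unfolding row_lower_def by simp
  next
    case False
    have "card {2..half m + 1} + card ({} :: (nat \<times> nat) set) \<le> card (C \<inter> row m)"
      by (intro card_row_ge_shift_half[OF C i]) auto
    with False show ?thesis unfolding row_lower_def by simp
  qed
qed

lemma card_middle_row_ge_extra:
  assumes C: "is_vertex_cover V SR C" and i: "1 < i" "i < m"
  shows "row_lower i + (if extra_cover C i then 1 else 0) \<le> card (C \<inter> row i)"
proof -
  have i': "1 \<le> i" "i \<le> m" using i by auto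
  have lower: "row_lower i + 1 = half i"
    using i n_eq_half[OF i'] two_le_half[OF i'] unfolding row_lower_def by auto
  have extra: "extra_cover C i \<longleftrightarrow> (i, 2) \<in> C \<or> (i, half i + 1) \<in> C"
    using i unfolding extra_cover_def far_from_exit_def far_from_entry_def by auto
  consider "(i, 2) \<in> C" | "(i, half i + 1) \<in> C" | "\<not> extra_cover C i" using extra by blast
  then show ?thesis
  proof cases
    case 1
    then have "card {3..half i + 1} + card {(i, 2::nat)} \<le> card (C \<inter> row i)"
      using i by (intro card_row_ge_shift_half[OF C i']) auto
    with lower extra 1 show ?thesis by simp
  next
    case 2
    then have "card {2..half i} + card {(i, half i + 1)} \<le> card (C \<inter> row i)"
      by (intro card_row_ge_shift_half_Suc[OF C i']) auto
    with lower extra 2 two_le_half[OF i'] show ?thesis by simp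
  next
    case 3
    have "card {3..half i + 1} + card ({} :: (nat \<times> nat) set) \<le> card (C \<inter> row i)"
      using i by (intro card_row_ge_shift_half[OF C i']) auto
    with lower 3 show ?thesis by simp
  qed
qed

lemma card_row_ge_extra:
  assumes C: "is_vertex_cover V SR C" and i: "1 \<le> i" "i \<le> m"
  shows "row_lower i + (if extra_cover C i then 1 else 0) \<le> card (C \<inter> row i)"
proof -
  consider "i = 1" | "i = m" | "1 < i \<and> i < m" using i by linarith
  then show ?thesis
    using card_first_row_ge_extra[OF C] card_last_row_ge_extra[OF C] card_middle_row_ge_extra[OF C]
    by cases auto
qed

lemma card_ge_if_vertex_cover:
  assumes C: "is_vertex_cover V SR C" and fin: "finite C"
  shows "m - 1 + half 1 + half m + (\<Sum>i = 2..m - 1. (n i - 2) div 2) \<le> card C"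
proof -
  let ?extra = "\<lambda>i. if extra_cover C i then 1 else (0::nat)"
  have "(\<Sum>i\<in>{1..m}. row_lower i + ?extra i) \<le> (\<Sum>i\<in>{1..m}. card (C \<inter> row i))"
    by (rule sum_mono) (use card_row_ge_extra[OF C] in auto)
  also have "\<dots> = card (\<Union>i\<in>{1..m}. C \<inter> row i)"
    by (rule card_UN_disjoint[symmetric]) (use fin in \<open>auto simp: row_def\<close>)
  also have "\<dots> \<le> card C" by (rule card_mono[OF fin]) auto
  finally have "(\<Sum>i\<in>{1..m}. row_lower i) + (\<Sum>i\<in>{1..m}. ?extra i) \<le> card C"
    by (simp add: sum.distrib)
  moreover have "(\<Sum>i\<in>{1..m}. ?extra i) = card {i\<in>{1..m}. extra_cover C i}"
    using sum.inter_filter[of "{1..m}" "\<lambda>_. 1::nat" "extra_cover C"] by simp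
  moreover have "(\<Sum>i = 2..m - 1. row_lower i) = (\<Sum>i = 2..m - 1. (n i - 2) div 2)"
    by (rule sum.cong) (auto simp: row_lower_def)
  then have "(\<Sum>i\<in>{1..m}. row_lower i) = half 1 + (\<Sum>i = 2..m - 1. (n i - 2) div 2) + half m"
    using sum_first_middle_last[OF two_le_m, of row_lower] by (simp add: row_lower_def)
  ultimately show ?thesis using card_extra_cover_ge[OF C] by linarith
qed

lemma card_cover: "card cover = m - 1 + half 1 + half m + (\<Sum>i = 2..m - 1. (n i - 2) div 2)"
proof -
  have card_first: "card (cover_row 1) = half 1 + 1"
  proof -
    have i: "1 \<le> (1::nat)" "1 \<le> m" using two_le_m by auto
    have "card ({1, 2} \<union> {half 1 + 3..n 1}) = card {1::nat, 2} + card {half 1 + 3..n 1}"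
      by (rule card_Un_disjoint) auto
    then show ?thesis unfolding cover_row_def using n_eq_half[OF i] two_le_half[OF i] by simp
  qed
  have card_other: "i \<noteq> 1 \<Longrightarrow> card (cover_row i) = half i" for i
    unfolding cover_row_def by simp
  have "(\<Sum>i = 2..m - 1. card (cover_row i)) = (\<Sum>i = 2..m - 1. (n i - 2) div 2 + 1)"
  proof (rule sum.cong)
    fix i assume "i \<in> {2..m - 1}"
    then have "1 \<le> i" "i \<le> m" "i \<noteq> 1" by auto
    then show "card (cover_row i) = (n i - 2) div 2 + 1"
      using card_other n_eq_half two_le_half by fastforce
  qed simp
  also have "\<dots> = (\<Sum>i = 2..m - 1. (n i - 2) div 2) + (m - 2)"
    by (subst sum.distrib) simp
  finally have middle:
    "(\<Sum>i = 2..m - 1. card (cover_row i)) = (\<Sum>i = 2..m - 1. (n i - 2) div 2) + (m - 2)" .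
  have "card cover = (\<Sum>i\<in>{1..m}. card (cover_row i))"
    unfolding cover_def by (simp add: cover_row_def)
  also have "\<dots> = card (cover_row 1) + (\<Sum>i = 2..m - 1. card (cover_row i)) + card (cover_row m)"
    by (rule sum_first_middle_last[OF two_le_m])
  finally show ?thesis using card_first card_other[of m] middle two_le_m by simp linarith
qed

lemma vertex_cover_number_eq:
  "vertex_cover_number V SR = m - 1 + half 1 + half m + (\<Sum>i = 2..m - 1. (n i - 2) div 2)"
  unfolding vertex_cover_number_def
proof (rule Least_equality)
  show "\<exists>C. is_vertex_cover V SR C \<and> finite C \<and>
      card C = m - 1 + half 1 + half m + (\<Sum>i = 2..m - 1. (n i - 2) div 2)"
    using cover_is_vertex_cover card_cover
    by (intro exI[of _ cover]) (auto simp: cover_def cover_row_def)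
qed (use card_ge_if_vertex_cover in blast)

end

theorem lemma3p7:
  fixes m :: nat and n :: "nat \<Rightarrow> nat"
  assumes "m \<ge> 2"
    and "\<forall>i\<in>{1..m}. odd (n i) \<and> n i \<ge> 5"
  shows "vertex_cover_number (occ_verts m n)
           (strong_resolving_adj (occ_verts m n) (occ_adj m n))
         = m - 1 + n 1 div 2 + n m div 2 + (\<Sum>i = 2..m - 1. (n i - 2) div 2)"
proof -
  interpret odd_chain_cycle m n using assms by unfold_locales auto
  show ?thesis by (rule vertex_cover_number_eq)
qed

end
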